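(* Let $G$ be a group acting without inversions on a tree $T$ and let $H$ be a subgroup of $G$ acting freely on the edges of $T$. If $K_{T}(H)<\infty$, then $H$ is tame.
   Context: An element is hyperbolic if it fixes no vertex of $T$. If $H$ contains a hyperbolic element, $T_H$ is the unique minimal $H$-invariant subtree of $T$. $H$ is tame if either $H$ fixes a vertex of $T$, or $H$ contains a hyperbolic element and $T_H/H$ is finite. A vertex $v$ of $T$ is $H$-degenerate if $H_v=H_e$ for some edge $e$ with initial vertex $v$; the vertex $[v]_H$ of $T/H$ is then degenerate. For $H$ acting freely on edges, the Kurosh rank is $K_T(H)=r(T/H)+|V_{ndeg}(T/H)|$ if $H$ contains a hyperbolic element, where $r(T/H)$ is the rank of the fundamental group of $T/H$ and $V_{ndeg}(T/H)$ the set of non-degenerate vertices of $T/H$, and $K_T(H)=1$ otherwise. *)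

theory Defs
  imports "HOL-Algebra.Group_Action" "HOL-Library.Extended_Nat"
begin

section \<open>Graphs in the sense of Serre\<close>

record ('v, 'e) sgraph =
  verts :: "'v set"
  arcs  :: "'e set"
  src   :: "'e \<Rightarrow> 'v"
  rev   :: "'e \<Rightarrow> 'e"

definition tgt :: "('v, 'e) sgraph \<Rightarrow> 'e \<Rightarrow> 'v" where
  "tgt g e = src g (rev g e)"

definition is_sgraph :: "('v, 'e) sgraph \<Rightarrow> bool" where
  "is_sgraph g \<longleftrightarrow> (\<forall>e \<in> arcs g. src g e \<in> verts g \<and> rev g e \<in> arcs g
      \<and> rev g (rev g e) = e \<and> rev g e \<noteq> e)"

definition is_path :: "('v, 'e) sgraph \<Rightarrow> 'v \<Rightarrow> 'e list \<Rightarrow> 'v \<Rightarrow> bool" where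
  "is_path g u es v \<longleftrightarrow> u \<in> verts g \<and> v \<in> verts g \<and> set es \<subseteq> arcs g \<and>
     (if es = [] then u = v
      else src g (hd es) = u \<and> tgt g (last es) = v \<and>
           (\<forall>i. Suc i < length es \<longrightarrow> tgt g (es ! i) = src g (es ! Suc i)))"

definition reduced :: "('v, 'e) sgraph \<Rightarrow> 'e list \<Rightarrow> bool" where
  "reduced g es \<longleftrightarrow> (\<forall>i. Suc i < length es \<longrightarrow> es ! Suc i \<noteq> rev g (es ! i))"

definition connected_sg :: "('v, 'e) sgraph \<Rightarrow> bool" where
  "connected_sg g \<longleftrightarrow> (\<forall>u \<in> verts g. \<forall>v \<in> verts g. \<exists>es. is_path g u es v)"

definition is_tree :: "('v, 'e) sgraph \<Rightarrow> bool" where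
  "is_tree g \<longleftrightarrow> is_sgraph g \<and> verts g \<noteq> {} \<and> connected_sg g \<and>
     \<not> (\<exists>v es. es \<noteq> [] \<and> is_path g v es v \<and> reduced g es)"

definition subg :: "('v, 'e) sgraph \<Rightarrow> 'v set \<Rightarrow> 'e set \<Rightarrow> ('v, 'e) sgraph" where
  "subg g V' E' = g\<lparr>verts := V', arcs := E'\<rparr>"

definition ecard :: "'a set \<Rightarrow> enat" where
  "ecard A = (if finite A then enat (card A) else \<infinity>)"

text \<open>Rank of the fundamental group of a connected graph: the number of geometric
  edges (pairs {e, e-bar}) not lying in a maximal (spanning) subtree.
  It is \<infinity> if this complement is infinite.\<close>
definition spanning_tree :: "('v, 'e) sgraph \<Rightarrow> 'e set \<Rightarrow> bool" where
  "spanning_tree g A \<longleftrightarrow> A \<subseteq> arcs g \<and> is_tree (subg g (verts g) A)"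

definition graph_rank :: "('v, 'e) sgraph \<Rightarrow> enat" where
  "graph_rank g = (if \<exists>A. spanning_tree g A \<and> finite (arcs g - A)
      then enat (card (arcs g - (SOME A. spanning_tree g A \<and> finite (arcs g - A))) div 2)
      else \<infinity>)"

definition tree_action :: "('g, 'b) monoid_scheme \<Rightarrow> ('v, 'e) sgraph
    \<Rightarrow> ('g \<Rightarrow> 'v \<Rightarrow> 'v) \<Rightarrow> ('g \<Rightarrow> 'e \<Rightarrow> 'e) \<Rightarrow> bool" where
  "tree_action G T \<phi> \<psi> \<longleftrightarrow> group G \<and> is_tree T \<and>
     group_action G (verts T) \<phi> \<and> group_action G (arcs T) \<psi> \<and>
     (\<forall>g \<in> carrier G. \<forall>e \<in> arcs T.
        src T (\<psi> g e) = \<phi> g (src T e) \<and> \<psi> g (rev T e) = rev T (\<psi> g e))"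

definition without_inversions :: "('g, 'b) monoid_scheme \<Rightarrow> ('v, 'e) sgraph
    \<Rightarrow> ('g \<Rightarrow> 'e \<Rightarrow> 'e) \<Rightarrow> bool" where
  "without_inversions G T \<psi> \<longleftrightarrow> (\<forall>g \<in> carrier G. \<forall>e \<in> arcs T. \<psi> g e \<noteq> rev T e)"

definition acts_freely_on_edges :: "('g, 'b) monoid_scheme \<Rightarrow> 'g set \<Rightarrow> ('v, 'e) sgraph
    \<Rightarrow> ('g \<Rightarrow> 'e \<Rightarrow> 'e) \<Rightarrow> bool" where
  "acts_freely_on_edges G H T \<psi> \<longleftrightarrow> (\<forall>h \<in> H. \<forall>e \<in> arcs T. \<psi> h e = e \<longrightarrow> h = \<one>\<^bsub>G\<^esub>)"

definition horb :: "'g set \<Rightarrow> ('g \<Rightarrow> 'x \<Rightarrow> 'x) \<Rightarrow> 'x \<Rightarrow> 'x set" where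
  "horb H f x = (\<lambda>h. f h x) ` H"

definition hstab :: "'g set \<Rightarrow> ('g \<Rightarrow> 'x \<Rightarrow> 'x) \<Rightarrow> 'x \<Rightarrow> 'g set" where
  "hstab H f x = {h \<in> H. f h x = x}"

definition hyperbolic :: "('v, 'e) sgraph \<Rightarrow> ('g \<Rightarrow> 'v \<Rightarrow> 'v) \<Rightarrow> 'g \<Rightarrow> bool" where
  "hyperbolic T \<phi> g \<longleftrightarrow> (\<forall>v \<in> verts T. \<phi> g v \<noteq> v)"

definition has_hyperbolic :: "'g set \<Rightarrow> ('v, 'e) sgraph \<Rightarrow> ('g \<Rightarrow> 'v \<Rightarrow> 'v) \<Rightarrow> bool" where
  "has_hyperbolic H T \<phi> \<longleftrightarrow> (\<exists>h \<in> H. hyperbolic T \<phi> h)"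

definition quot_graph :: "'g set \<Rightarrow> ('v, 'e) sgraph \<Rightarrow> ('g \<Rightarrow> 'v \<Rightarrow> 'v)
    \<Rightarrow> ('g \<Rightarrow> 'e \<Rightarrow> 'e) \<Rightarrow> ('v set, 'e set) sgraph" where
  "quot_graph H T \<phi> \<psi> =
     \<lparr> verts = horb H \<phi> ` verts T,
       arcs = horb H \<psi> ` arcs T,
       src = (\<lambda>c. horb H \<phi> (src T (SOME e. e \<in> c))),
       rev = (\<lambda>c. horb H \<psi> (rev T (SOME e. e \<in> c))) \<rparr>"

definition H_degenerate :: "'g set \<Rightarrow> ('v, 'e) sgraph \<Rightarrow> ('g \<Rightarrow> 'v \<Rightarrow> 'v)
    \<Rightarrow> ('g \<Rightarrow> 'e \<Rightarrow> 'e) \<Rightarrow> 'v \<Rightarrow> bool" where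
  "H_degenerate H T \<phi> \<psi> v \<longleftrightarrow>
     (\<exists>e \<in> arcs T. src T e = v \<and> hstab H \<phi> v = hstab H \<psi> e)"

definition nondeg_quot_verts :: "'g set \<Rightarrow> ('v, 'e) sgraph \<Rightarrow> ('g \<Rightarrow> 'v \<Rightarrow> 'v)
    \<Rightarrow> ('g \<Rightarrow> 'e \<Rightarrow> 'e) \<Rightarrow> 'v set set" where
  "nondeg_quot_verts H T \<phi> \<psi> =
     {c \<in> horb H \<phi> ` verts T. \<not> (\<exists>v \<in> c. H_degenerate H T \<phi> \<psi> v)}"

definition kurosh_rank :: "'g set \<Rightarrow> ('v, 'e) sgraph \<Rightarrow> ('g \<Rightarrow> 'v \<Rightarrow> 'v)
    \<Rightarrow> ('g \<Rightarrow> 'e \<Rightarrow> 'e) \<Rightarrow> enat" where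
  "kurosh_rank H T \<phi> \<psi> =
     (if has_hyperbolic H T \<phi>
      then graph_rank (quot_graph H T \<phi> \<psi>) + ecard (nondeg_quot_verts H T \<phi> \<psi>)
      else 1)"

definition inv_subtree :: "'g set \<Rightarrow> ('v, 'e) sgraph \<Rightarrow> ('g \<Rightarrow> 'v \<Rightarrow> 'v)
    \<Rightarrow> ('g \<Rightarrow> 'e \<Rightarrow> 'e) \<Rightarrow> 'v set \<Rightarrow> 'e set \<Rightarrow> bool" where
  "inv_subtree H T \<phi> \<psi> V' E' \<longleftrightarrow> V' \<subseteq> verts T \<and> E' \<subseteq> arcs T \<and>
     is_tree (subg T V' E') \<and> (\<forall>h \<in> H. \<phi> h ` V' \<subseteq> V' \<and> \<psi> h ` E' \<subseteq> E')"

definition minimal_inv_subtree :: "'g set \<Rightarrow> ('v, 'e) sgraph \<Rightarrow> ('g \<Rightarrow> 'v \<Rightarrow> 'v)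
    \<Rightarrow> ('g \<Rightarrow> 'e \<Rightarrow> 'e) \<Rightarrow> 'v set \<Rightarrow> 'e set \<Rightarrow> bool" where
  "minimal_inv_subtree H T \<phi> \<psi> V' E' \<longleftrightarrow> inv_subtree H T \<phi> \<psi> V' E' \<and>
     (\<forall>V'' E''. inv_subtree H T \<phi> \<psi> V'' E'' \<and> V'' \<subseteq> V' \<and> E'' \<subseteq> E'
        \<longrightarrow> V'' = V' \<and> E'' = E')"

definition tame :: "'g set \<Rightarrow> ('v, 'e) sgraph \<Rightarrow> ('g \<Rightarrow> 'v \<Rightarrow> 'v)
    \<Rightarrow> ('g \<Rightarrow> 'e \<Rightarrow> 'e) \<Rightarrow> bool" where
  "tame H T \<phi> \<psi> \<longleftrightarrow>
     (\<exists>v \<in> verts T. \<forall>h \<in> H. \<phi> h v = v) \<or>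
     (has_hyperbolic H T \<phi> \<and>
      (\<exists>V' E'. minimal_inv_subtree H T \<phi> \<psi> V' E' \<and>
               finite (horb H \<phi> ` V') \<and> finite (horb H \<psi> ` E')))"

end

theory Submission
  imports Defs
begin

text \<open>
  If H has no hyperbolic element, every nontrivial h \<in> H fixes exactly one vertex, since
  fixing two would force h to fix the edges of the geodesic between them. For nontrivial
  g, h \<in> H pick x fixed by h\<inverse>g; the reduced paths from x to g x = h x through the fixed
  points of g and of h coincide, so these fixed points are equal and H fixes a vertex.

  Otherwise K_T(H) < \<infinity> provides a spanning tree A of T/H with finitely many edges outside
  it, and finitely many non-degenerate vertices. Take a finite subtree of A containing the
  non-degenerate vertices and the sources of the edges outside A, and let X be its preimage
  in T together with the preimages of the edges outside A. A vertex outside X is degenerate,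
  so its stabiliser is an edge stabiliser and hence trivial. Therefore a reduced path of T
  that leaves X and returns to it projects to a reduced path in A between two vertices of the
  finite subtree, which must be the path inside that subtree; but its edges lift into X.
  Hence X is connected, so it is an H-invariant subtree with finite quotient, and among such
  subtrees one with fewest orbits is minimal.
\<close>

lemma is_path_Nil [simp]: "is_path g u [] v \<longleftrightarrow> u = v \<and> u \<in> verts g"
  unfolding is_path_def by auto

lemma is_sgraph_arcD:
  assumes "is_sgraph g" "e \<in> arcs g"
  shows "rev g e \<in> arcs g" "rev g (rev g e) = e" "rev g e \<noteq> e" "src g e \<in> verts g"
    "tgt g e \<in> verts g" "tgt g (rev g e) = src g e" "src g (rev g e) = tgt g e"
  using assms unfolding is_sgraph_def tgt_def by auto

lemma is_path_ConsD:
  assumes "is_sgraph g" "is_path g u (e # es) v"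
  shows "e \<in> arcs g" "src g e = u" "is_path g (tgt g e) es v"
proof -
  show e: "e \<in> arcs g" "src g e = u" using assms(2) unfolding is_path_def by auto
  have tv: "tgt g e \<in> verts g" using is_sgraph_arcD(5)[OF assms(1) e(1)] .
  show "is_path g (tgt g e) es v"
  proof (cases "es = []")
    case True thus ?thesis using assms(2) tv unfolding is_path_def by auto
  next
    case False
    have "\<forall>i. Suc i < length es \<longrightarrow> tgt g (es ! i) = src g (es ! Suc i)"
    proof (intro allI impI)
      fix i assume "Suc i < length es"
      hence "Suc (Suc i) < length (e # es)" by simp
      thus "tgt g (es ! i) = src g (es ! Suc i)" using assms(2) unfolding is_path_def
        by (metis list.distinct(1) nth_Cons_Suc)
    qed
    moreover have "tgt g e = src g (hd es)" using assms(2) False unfolding is_path_def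
      by (metis hd_conv_nth length_greater_0_conv list.distinct(1) length_Cons
          nth_Cons_0 nth_Cons_Suc Suc_less_eq)
    moreover have "tgt g (last es) = v" using assms(2) False unfolding is_path_def by auto
    ultimately show ?thesis using assms(2) tv False unfolding is_path_def by auto
  qed
qed

lemma is_path_ConsI:
  assumes "is_sgraph g" "e \<in> arcs g" "is_path g (tgt g e) es v"
  shows "is_path g (src g e) (e # es) v"
proof (cases "es = []")
  case True thus ?thesis using assms is_sgraph_arcD(4) unfolding is_path_def by auto
next
  case False
  have "tgt g ((e # es) ! i) = src g ((e # es) ! Suc i)" if "Suc i < length (e # es)" for i
  proof (cases i)
    case 0 thus ?thesis using assms(3) False unfolding is_path_def by (simp add: hd_conv_nth)
  next
    case (Suc j) thus ?thesis using assms(3) False that unfolding is_path_def by auto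
  qed
  thus ?thesis using assms is_sgraph_arcD(4) False unfolding is_path_def by auto
qed

lemma is_path_Cons:
  assumes "is_sgraph g"
  shows "is_path g u (e # es) v \<longleftrightarrow> e \<in> arcs g \<and> src g e = u \<and> is_path g (tgt g e) es v"
  using is_path_ConsD[OF assms] is_path_ConsI[OF assms] by metis

lemma is_path_start: "is_path g u p v \<Longrightarrow> u \<in> verts g"
  unfolding is_path_def by blast

lemma is_path_arcs: "is_path g u p v \<Longrightarrow> set p \<subseteq> arcs g"
  unfolding is_path_def by auto

lemma is_path_append:
  assumes "is_sgraph g"
  shows "is_path g u (p @ q) w \<longleftrightarrow> (\<exists>v. is_path g u p v \<and> is_path g v q w)"
  using assms by (induction p arbitrary: u) (auto simp: is_path_Cons dest: is_path_start)

lemma is_path_snoc: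
  assumes "is_sgraph g"
  shows "is_path g u (p @ [e]) w \<longleftrightarrow> is_path g u p (src g e) \<and> e \<in> arcs g \<and> tgt g e = w"
  using is_sgraph_arcD(5)[OF assms] by (auto simp: is_path_append[OF assms] is_path_Cons[OF assms])

lemma is_path_end_unique:
  assumes "is_sgraph g" "is_path g u p v" "is_path g u p w"
  shows "v = w"
  using assms(2,3) by (induction p arbitrary: u) (auto simp: is_path_Cons[OF assms(1)])

lemma reduced_Nil [simp]: "reduced g []"
  and reduced_singleton [simp]: "reduced g [e]"
  unfolding reduced_def by auto

lemma reduced_Cons_Cons: "reduced g (e # f # es) \<longleftrightarrow> f \<noteq> rev g e \<and> reduced g (f # es)"
  unfolding reduced_def by (auto simp: nth_Cons split: nat.split)

lemma reduced_Cons: "reduced g (e # es) \<longleftrightarrow> (es \<noteq> [] \<longrightarrow> hd es \<noteq> rev g e) \<and> reduced g es"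
  by (cases es) (auto simp: reduced_Cons_Cons)

lemma reduced_append:
  "reduced g (p @ q) \<longleftrightarrow> reduced g p \<and> reduced g q \<and>
     (p \<noteq> [] \<and> q \<noteq> [] \<longrightarrow> hd q \<noteq> rev g (last p))"
  by (induction p) (auto simp: reduced_Cons)

lemma reduced_subpath_exists:
  assumes "is_sgraph g" "is_path g u p v"
  shows "\<exists>q. is_path g u q v \<and> reduced g q \<and> set q \<subseteq> set p"
  using assms(2)
proof (induction p arbitrary: u)
  case Nil thus ?case by auto
next
  case (Cons e p)
  hence e: "e \<in> arcs g" "src g e = u" "is_path g (tgt g e) p v"
    using is_path_Cons[OF assms(1)] by auto
  then obtain q where q: "is_path g (tgt g e) q v" "reduced g q" "set q \<subseteq> set p"
    using Cons.IH by blast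
  show ?case
  proof (cases "q \<noteq> [] \<and> hd q = rev g e")
    case True
    then obtain q' where "q = rev g e # q'" by (cases q) auto
    hence "is_path g u q' v" "reduced g q'" "set q' \<subseteq> set (e # p)"
      using q e is_sgraph_arcD[OF assms(1) e(1)] by (auto simp: is_path_Cons[OF assms(1)] reduced_Cons)
    thus ?thesis by blast
  next
    case False
    hence "is_path g u (e # q) v" "reduced g (e # q)"
      using e q by (auto simp: is_path_Cons[OF assms(1)] reduced_Cons)
    thus ?thesis using q(3) by (intro exI[of _ "e # q"]) auto
  qed
qed

definition rev_path :: "('v, 'e, 'z) sgraph_scheme \<Rightarrow> 'e list \<Rightarrow> 'e list" where
  "rev_path g p = List.rev (map (rev g) p)"

lemma rev_path_Nil [simp]: "rev_path g [] = []"
  and rev_path_Cons: "rev_path g (e # p) = rev_path g p @ [rev g e]"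
  and rev_path_snoc [simp]: "rev_path g (p @ [e]) = rev g e # rev_path g p"
  and length_rev_path [simp]: "length (rev_path g p) = length p"
  and set_rev_path: "set (rev_path g p) = rev g ` set p"
  unfolding rev_path_def by auto

lemma is_path_rev_path:
  assumes "is_sgraph g" "is_path g u p v"
  shows "is_path g v (rev_path g p) u"
  using assms(2)
proof (induction p arbitrary: u)
  case Nil thus ?case by auto
next
  case (Cons e p)
  hence "e \<in> arcs g" "src g e = u" "is_path g v (rev_path g p) (tgt g e)"
    using is_path_Cons[OF assms(1)] by auto
  thus ?case using is_sgraph_arcD[OF assms(1)]
    by (auto simp: rev_path_Cons is_path_snoc[OF assms(1)])
qed

lemma reduced_rev_path:
  assumes "is_sgraph g" "set p \<subseteq> arcs g" "reduced g p"
  shows "reduced g (rev_path g p)"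
  using assms(2,3)
proof (induction p)
  case Nil thus ?case by simp
next
  case (Cons e p)
  show ?case
  proof (cases p)
    case (Cons f p')
    hence "f \<noteq> rev g e" "e \<in> arcs g" "f \<in> arcs g" "last (rev_path g p) = rev g f"
      using \<open>reduced g (e # p)\<close> \<open>set (e # p) \<subseteq> arcs g\<close> by (auto simp: reduced_Cons_Cons rev_path_Cons)
    hence "rev g e \<noteq> rev g (last (rev_path g p))" using is_sgraph_arcD(2)[OF assms(1)] by metis
    thus ?thesis using Cons.IH Cons.prems by (simp add: rev_path_Cons reduced_append reduced_Cons)
  qed (simp add: rev_path_def)
qed

lemma tree_reduced_path_unique:
  assumes "is_tree g" "is_path g u p v" "reduced g p" "is_path g u q v" "reduced g q"
  shows "p = q"
  using assms(2-5)
proof (induction "length p" arbitrary: p q v rule: less_induct)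
  case less
  have sg: "is_sgraph g" using assms(1) unfolding is_tree_def by auto
  have no_circuit: "\<And>w es. is_path g w es w \<Longrightarrow> reduced g es \<Longrightarrow> es = []"
    using assms(1) unfolding is_tree_def by auto
  show ?case
  proof (cases "p = [] \<or> q = []")
    case True
    thus ?thesis using less.prems no_circuit is_path_end_unique[OF sg] by (metis is_path_Nil)
  next
    case False
    then obtain p' a q' b where pq: "p = p' @ [a]" "q = q' @ [b]" by (metis rev_exhaust)
    have a: "is_path g u p' (src g a)" "a \<in> arcs g" "tgt g a = v"
      and b: "is_path g u q' (src g b)" "b \<in> arcs g" "tgt g b = v"
      using less.prems pq is_path_snoc[OF sg] by auto
    show ?thesis
    proof (cases "a = b")
      case True
      hence "p' = q'" using a b pq less.prems by (intro less.hyps) (auto simp: reduced_append)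
      thus ?thesis using pq True by simp
    next
      case False
      \<comment> \<open>otherwise p followed by the reverse of q is a reduced circuit at u\<close>
      have "is_path g u (p @ rev_path g q) u"
        using less.prems is_path_rev_path[OF sg] is_path_append[OF sg] by blast
      moreover have "rev g b \<noteq> rev g a" using False is_sgraph_arcD(2)[OF sg] a b by metis
      hence "reduced g (p @ rev_path g q)"
        using reduced_rev_path[OF sg is_path_arcs[OF less.prems(3)] less.prems(4)] less.prems(2) pq
        by (simp add: reduced_append reduced_Cons_Cons)
      ultimately show ?thesis using no_circuit pq by auto
    qed
  qed
qed

lemma tree_reduced_path_exists:
  assumes "is_tree g" "u \<in> verts g" "v \<in> verts g"
  shows "\<exists>p. is_path g u p v \<and> reduced g p"
proof -
  have "is_sgraph g" using assms(1) unfolding is_tree_def by auto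
  moreover obtain p where "is_path g u p v"
    using assms unfolding is_tree_def connected_sg_def by blast
  ultimately show ?thesis by (metis reduced_subpath_exists)
qed

lemma subg_simps [simp]:
  "verts (subg g V E) = V" "arcs (subg g V E) = E" "src (subg g V E) = src g"
  "rev (subg g V E) = rev g" "tgt (subg g V E) = tgt g"
  unfolding subg_def tgt_def by auto

lemma is_path_subg:
  assumes "V \<subseteq> verts g" "E \<subseteq> arcs g"
  shows "is_path (subg g V E) u p v \<longleftrightarrow> is_path g u p v \<and> set p \<subseteq> E \<and> u \<in> V \<and> v \<in> V"
  using assms unfolding is_path_def by auto

lemma reduced_subg [simp]: "reduced (subg g V E) p \<longleftrightarrow> reduced g p"
  unfolding reduced_def by simp

fun path_verts :: "('v, 'e) sgraph \<Rightarrow> 'v \<Rightarrow> 'e list \<Rightarrow> 'v list" where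
  "path_verts g u [] = [u]"
| "path_verts g u (e # p) = u # path_verts g (tgt g e) p"

lemma path_verts_start [simp]: "u \<in> set (path_verts g u p)"
  by (cases p) auto

lemma path_to_path_vert:
  assumes "is_sgraph g" "is_path g u p v" "w \<in> set (path_verts g u p)"
  shows "\<exists>q. is_path g u q w \<and> set q \<subseteq> set p"
  using assms(2,3)
proof (induction p arbitrary: u)
  case Nil thus ?case by (intro exI[of _ "[]"]) auto
next
  case (Cons e p)
  hence e: "e \<in> arcs g" "src g e = u" "is_path g (tgt g e) p v"
    using is_path_Cons[OF assms(1)] by auto
  show ?case
  proof (cases "w = u")
    case True thus ?thesis using is_path_start[OF Cons.prems(1)] by (intro exI[of _ "[]"]) auto
  next
    case False
    then obtain q where "is_path g (tgt g e) q w" "set q \<subseteq> set p" using Cons e by auto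
    thus ?thesis using e by (intro exI[of _ "e # q"]) (auto simp: is_path_Cons[OF assms(1)])
  qed
qed

lemma path_verts_arc_ends:
  assumes "is_sgraph g" "is_path g u p v" "e \<in> set p"
  shows "src g e \<in> set (path_verts g u p)" "tgt g e \<in> set (path_verts g u p)"
  using assms(2,3)
  by (induction p arbitrary: u) (auto simp: is_path_Cons[OF assms(1)])

lemma path_verts_end: "is_sgraph g \<Longrightarrow> is_path g u p v \<Longrightarrow> v \<in> set (path_verts g u p)"
  by (induction p arbitrary: u) (auto simp: is_path_Cons)

lemma path_verts_subset: "is_sgraph g \<Longrightarrow> is_path g u p v \<Longrightarrow> set (path_verts g u p) \<subseteq> verts g"
  by (induction p arbitrary: u) (auto simp: is_path_Cons is_sgraph_arcD(4))

lemma tree_finite_connecting_arcs: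
  assumes "is_tree g" "finite S" "S \<subseteq> verts g" "S \<noteq> {}"
  shows "\<exists>W E0. finite W \<and> finite E0 \<and> S \<subseteq> W \<and> W \<subseteq> verts g \<and> E0 \<subseteq> arcs g \<and>
     (\<forall>e\<in>E0. src g e \<in> W \<and> rev g e \<in> E0) \<and>
     (\<forall>a\<in>W. \<forall>c\<in>W. \<exists>p. is_path g a p c \<and> reduced g p \<and> set p \<subseteq> E0)"
proof -
  have sg: "is_sgraph g" using assms(1) unfolding is_tree_def by auto
  obtain b where "b \<in> S" using assms(4) by blast
  hence "\<forall>s\<in>S. \<exists>p. is_path g b p s" using assms unfolding is_tree_def connected_sg_def by blast
  then obtain P where P: "\<And>s. s \<in> S \<Longrightarrow> is_path g b (P s) s" by metis
  define E1 where "E1 = (\<Union>s\<in>S. set (P s))"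
  define E0 where "E0 = E1 \<union> rev g ` E1"
  define W where "W = (\<Union>s\<in>S. set (path_verts g b (P s)))"
  have E1_arcs: "E1 \<subseteq> arcs g" unfolding E1_def using is_path_arcs[OF P] by (rule UN_least)
  have SW: "S \<subseteq> W" unfolding W_def using P path_verts_end[OF sg] by blast
  have WV: "W \<subseteq> verts g" unfolding W_def using P path_verts_subset[OF sg] by blast
  have E0_arcs: "E0 \<subseteq> arcs g" unfolding E0_def using E1_arcs is_sgraph_arcD(1)[OF sg] by blast
  have closed: "src g e \<in> W" "rev g e \<in> E0" if "e \<in> E0" for e
  proof -
    obtain f s where f: "s \<in> S" "f \<in> set (P s)" "e = f \<or> e = rev g f"
      using \<open>e \<in> E0\<close> unfolding E0_def E1_def by blast
    have fa: "f \<in> arcs g" using f E1_arcs unfolding E1_def by blast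
    have fE1: "f \<in> E1" and ends: "src g f \<in> W" "tgt g f \<in> W"
      using f path_verts_arc_ends[OF sg P[OF f(1)] f(2)] unfolding W_def E1_def by blast+
    show "src g e \<in> W" "rev g e \<in> E0"
      using f(3) fE1 ends is_sgraph_arcD(2,7)[OF sg fa] unfolding E0_def by auto
  qed
  have connects: "\<exists>p. is_path g a p c \<and> reduced g p \<and> set p \<subseteq> E0" if "a \<in> W" "c \<in> W" for a c
  proof -
    have reach: "\<exists>q. is_path g b q x \<and> set q \<subseteq> E1" if "x \<in> W" for x
      using that path_to_path_vert[OF sg P] unfolding W_def E1_def by blast
    obtain qa qc where "is_path g b qa a" "set qa \<subseteq> E1" "is_path g b qc c" "set qc \<subseteq> E1"
      using reach \<open>a \<in> W\<close> \<open>c \<in> W\<close> by metis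
    hence "is_path g a (rev_path g qa @ qc) c"
      using is_path_rev_path[OF sg] is_path_append[OF sg] by blast
    moreover have "set (rev_path g qa @ qc) \<subseteq> E0"
      using \<open>set qa \<subseteq> E1\<close> \<open>set qc \<subseteq> E1\<close> unfolding E0_def by (auto simp: set_rev_path)
    ultimately show ?thesis using reduced_subpath_exists[OF sg] by (meson order_trans)
  qed
  have finite: "finite W" "finite E0" unfolding W_def E0_def E1_def using assms(2) by auto
  show ?thesis
    by (intro exI[of _ W] exI[of _ E0] conjI ballI) (rule finite SW WV E0_arcs closed connects | assumption)+
qed

sublocale group_action \<subseteq> group G
  using group_hom group_hom.axioms(1) by blast

context group_action
begin

lemma action_one: "x \<in> E \<Longrightarrow> \<phi> \<one> x = x"
  by (metis id_eq_one restrict_apply')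

lemma action_inv_cancel:
  assumes "g \<in> carrier G" "x \<in> E"
  shows "\<phi> (inv g) (\<phi> g x) = x" "\<phi> g (\<phi> (inv g) x) = x"
  using composition_rule[OF assms(2) inv_closed[OF assms(1)] assms(1)]
    composition_rule[OF assms(2) assms(1) inv_closed[OF assms(1)]] assms action_one
  by simp_all

lemma mem_horb_self: "subgroup H G \<Longrightarrow> x \<in> E \<Longrightarrow> x \<in> horb H \<phi> x"
  unfolding horb_def using action_one subgroup.one_closed by (metis image_eqI)

lemma horb_act_eq:
  assumes "subgroup H G" "h \<in> H" "x \<in> E"
  shows "horb H \<phi> (\<phi> h x) = horb H \<phi> x"
proof -
  have h: "h \<in> carrier G" using subgroup.mem_carrier[OF assms(1,2)] .
  have "horb H \<phi> (\<phi> h x) = (\<lambda>k. \<phi> (k \<otimes> h) x) ` H"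
    unfolding horb_def
    using composition_rule[OF assms(3) subgroup.mem_carrier[OF assms(1)] h] by (intro image_cong) simp_all
  also have "\<dots> = (\<lambda>k. \<phi> k x) ` ((\<lambda>k. k \<otimes> h) ` H)"
    by (simp only: image_image)
  also have "(\<lambda>k. k \<otimes> h) ` H = H"
    using subgroup.rcos_const[OF assms(1) is_group assms(2)] unfolding r_coset_def by auto
  finally show ?thesis unfolding horb_def .
qed

lemma horb_eqD:
  assumes "subgroup H G" "y \<in> E" "horb H \<phi> y = horb H \<phi> x"
  shows "\<exists>h\<in>H. y = \<phi> h x"
  using mem_horb_self[OF assms(1,2)] assms(3) unfolding horb_def by auto

lemma invariant_subset_eq_if_horb_image_eq:
  assumes "subgroup H G" "V' \<subseteq> V" "V \<subseteq> E" "\<forall>h\<in>H. \<phi> h ` V' \<subseteq> V'"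
    and "horb H \<phi> ` V' = horb H \<phi> ` V"
  shows "V' = V"
proof
  show "V \<subseteq> V'"
  proof
    fix x assume "x \<in> V"
    then obtain y where "y \<in> V'" "horb H \<phi> x = horb H \<phi> y" using assms(5) by (metis imageE imageI)
    moreover have "x \<in> E" using \<open>x \<in> V\<close> assms(3) by blast
    ultimately show "x \<in> V'" using horb_eqD[OF assms(1)] assms(4) by blast
  qed
qed (rule assms(2))

end

section \<open>A subgroup acting freely on the edges of a tree\<close>

locale edge_free_action =
  fixes G :: "('g, 'b) monoid_scheme" (structure) and H :: "'g set"
    and T :: "('v, 'e) sgraph" and \<phi> :: "'g \<Rightarrow> 'v \<Rightarrow> 'v" and \<psi> :: "'g \<Rightarrow> 'e \<Rightarrow> 'e"
  assumes action: "tree_action G T \<phi> \<psi>"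
    and no_inversion: "without_inversions G T \<psi>"
    and subgroup_H: "subgroup H G"
    and edge_free: "acts_freely_on_edges G H T \<psi>"

sublocale edge_free_action \<subseteq> group G
  using action unfolding tree_action_def by blast

sublocale edge_free_action \<subseteq> V: group_action G "verts T" \<phi>
  using action unfolding tree_action_def by blast

sublocale edge_free_action \<subseteq> A: group_action G "arcs T" \<psi>
  using action unfolding tree_action_def by blast

sublocale edge_free_action \<subseteq> H: subgroup H G
  by (rule subgroup_H)

context edge_free_action
begin

lemma tree: "is_tree T" and sgraph: "is_sgraph T"
  using action unfolding tree_action_def is_tree_def by auto

lemma src_act: "g \<in> carrier G \<Longrightarrow> e \<in> arcs T \<Longrightarrow> src T (\<psi> g e) = \<phi> g (src T e)"
  and rev_act: "g \<in> carrier G \<Longrightarrow> e \<in> arcs T \<Longrightarrow> \<psi> g (rev T e) = rev T (\<psi> g e)"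
  using action unfolding tree_action_def by auto

lemma tgt_act: "g \<in> carrier G \<Longrightarrow> e \<in> arcs T \<Longrightarrow> tgt T (\<psi> g e) = \<phi> g (tgt T e)"
  unfolding tgt_def using rev_act src_act is_sgraph_arcD(1)[OF sgraph] by metis

lemma fixed_arc_imp_one: "h \<in> H \<Longrightarrow> e \<in> arcs T \<Longrightarrow> \<psi> h e = e \<Longrightarrow> h = \<one>"
  using edge_free unfolding acts_freely_on_edges_def by auto

lemma is_path_act:
  assumes "g \<in> carrier G" "is_path T u p v"
  shows "is_path T (\<phi> g u) (map (\<psi> g) p) (\<phi> g v)"
  using assms(2)
proof (induction p arbitrary: u)
  case Nil thus ?case using V.element_image[OF assms(1)] by auto
next
  case (Cons e p)
  hence "e \<in> arcs T" "src T e = u" "is_path T (tgt T e) p v" using is_path_Cons[OF sgraph] by auto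
  thus ?case using Cons.IH A.element_image[OF assms(1)] src_act[OF assms(1)] tgt_act[OF assms(1)]
    by (simp add: is_path_Cons[OF sgraph])
qed

lemma reduced_act:
  assumes "g \<in> carrier G" "set p \<subseteq> arcs T" "reduced T p"
  shows "reduced T (map (\<psi> g) p)"
  using assms(2,3)
proof (induction p)
  case (Cons e p)
  show ?case
  proof (cases p)
    case (Cons f p')
    hence ef: "e \<in> arcs T" "f \<in> arcs T" "f \<noteq> rev T e"
      using \<open>set (e # p) \<subseteq> arcs T\<close> \<open>reduced T (e # p)\<close> by (auto simp: reduced_Cons_Cons)
    hence "\<psi> g f \<noteq> rev T (\<psi> g e)"
      using A.inj_prop[OF assms(1)] is_sgraph_arcD(1)[OF sgraph] rev_act[OF assms(1)]
      by (metis inj_on_eq_iff)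
    thus ?thesis using Cons.IH Cons.prems Cons by (simp add: reduced_Cons_Cons reduced_Cons)
  qed simp
qed simp

lemma fixed_vertex_unique:
  assumes "g \<in> H" "g \<noteq> \<one>" "u \<in> verts T" "w \<in> verts T" "\<phi> g u = u" "\<phi> g w = w"
  shows "u = w"
proof -
  obtain p where p: "is_path T u p w" "reduced T p" using tree_reduced_path_exists[OF tree assms(3,4)] by blast
  have "is_path T u (map (\<psi> g) p) w" "reduced T (map (\<psi> g) p)"
    using is_path_act[OF H.mem_carrier[OF assms(1)] p(1)] reduced_act[OF _ is_path_arcs[OF p(1)] p(2)]
      assms by auto
  hence "map (\<psi> g) p = p" using tree_reduced_path_unique[OF tree] p by metis
  thus ?thesis
    using p is_path_arcs[OF p(1)] fixed_arc_imp_one[OF assms(1)] assms(2) by (cases p) auto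
qed

lemma detour_through_fixed_vertex:
  assumes "g \<in> H" "g \<noteq> \<one>" "\<phi> g u = u" "is_path T x a u" "reduced T a" "a \<noteq> []"
  shows "is_path T x (a @ map (\<psi> g) (rev_path T a)) (\<phi> g x)"
    and "reduced T (a @ map (\<psi> g) (rev_path T a))"
proof -
  have g: "g \<in> carrier G" using assms(1) by simp
  have ra: "is_path T u (rev_path T a) x" using is_path_rev_path[OF sgraph assms(4)] .
  show "is_path T x (a @ map (\<psi> g) (rev_path T a)) (\<phi> g x)"
    using is_path_act[OF g ra] assms(3,4) is_path_append[OF sgraph] by auto
  obtain a' l where al: "a = a' @ [l]" using assms(6) by (metis rev_exhaust)
  have l: "l \<in> arcs T" using is_path_arcs[OF assms(4)] al by auto
  \<comment> \<open>no backtracking at u because g fixes no edge\<close>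
  have "\<psi> g (rev T l) \<noteq> rev T l" using fixed_arc_imp_one[OF assms(1)] is_sgraph_arcD(1)[OF sgraph l] assms(2) by blast
  moreover have "reduced T (map (\<psi> g) (rev_path T a))"
    using reduced_act[OF g is_path_arcs[OF ra] reduced_rev_path[OF sgraph is_path_arcs[OF assms(4)] assms(5)]] .
  ultimately show "reduced T (a @ map (\<psi> g) (rev_path T a))"
    using assms(5) al by (simp add: reduced_append reduced_Cons_Cons)
qed

lemma fixed_vertices_eq:
  assumes "g \<in> H" "g \<noteq> \<one>" "h \<in> H" "h \<noteq> \<one>"
    and "u \<in> verts T" "w \<in> verts T" "\<phi> g u = u" "\<phi> h w = w"
    and "x \<in> verts T" "\<phi> g x = \<phi> h x"
  shows "u = w"
proof -
  obtain a where a: "is_path T x a u" "reduced T a" using tree_reduced_path_exists[OF tree assms(9,5)] by blast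
  obtain b where b: "is_path T x b w" "reduced T b" using tree_reduced_path_exists[OF tree assms(9,6)] by blast
  consider "a = []" | "b = []" | "a \<noteq> []" "b \<noteq> []" by blast
  thus ?thesis
  proof cases
    case 1 thus ?thesis using a assms fixed_vertex_unique[OF assms(3,4,5,6)] by auto
  next
    case 2 thus ?thesis using b assms fixed_vertex_unique[OF assms(1,2,5,6)] by auto
  next
    case 3
    have "a @ map (\<psi> g) (rev_path T a) = b @ map (\<psi> h) (rev_path T b)"
      using detour_through_fixed_vertex[OF assms(1,2,7) a] detour_through_fixed_vertex[OF assms(3,4,8) b]
        3 assms(10) tree_reduced_path_unique[OF tree] by metis
    moreover from arg_cong[OF this, of length] have "length a = length b" by simp
    ultimately have "a = b" by (simp add: append_eq_append_conv)
    thus ?thesis using a b is_path_end_unique[OF sgraph] by blast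
  qed
qed

lemma fixed_vertex_if_no_hyperbolic:
  assumes "\<not> has_hyperbolic H T \<phi>"
  shows "\<exists>v \<in> verts T. \<forall>h \<in> H. \<phi> h v = v"
proof (cases "H = {\<one>}")
  case True
  obtain v where "v \<in> verts T" using tree unfolding is_tree_def by blast
  thus ?thesis using True V.action_one by auto
next
  case False
  then obtain g where g: "g \<in> H" "g \<noteq> \<one>" using H.one_closed by blast
  have elliptic: "\<And>k. k \<in> H \<Longrightarrow> \<exists>v \<in> verts T. \<phi> k v = v"
    using assms unfolding has_hyperbolic_def hyperbolic_def by blast
  obtain u where u: "u \<in> verts T" "\<phi> g u = u" using elliptic[OF g(1)] by blast
  have "\<phi> h u = u" if h: "h \<in> H" for h
  proof (cases "h = \<one>")
    case True thus ?thesis using V.action_one u by simp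
  next
    case False
    obtain w where w: "w \<in> verts T" "\<phi> h w = w" using elliptic[OF h] by blast
    obtain x where x: "x \<in> verts T" "\<phi> (inv h \<otimes> g) x = x"
      using elliptic[of "inv h \<otimes> g"] g h H.m_closed H.m_inv_closed by blast
    have "\<phi> g x = \<phi> h x"
      using V.composition_rule[OF x(1)] V.action_inv_cancel(2) V.element_image x g h
      by (metis H.mem_carrier inv_closed)
    hence "u = w" using fixed_vertices_eq[OF g h False u(1) w(1) u(2) w(2) x(1)] by simp
    thus ?thesis using w by simp
  qed
  thus ?thesis using u by blast
qed

section \<open>The quotient graph\<close>

abbreviation quot where "quot \<equiv> quot_graph H T \<phi> \<psi>"
abbreviation vorb where "vorb \<equiv> horb H \<phi>"
abbreviation aorb where "aorb \<equiv> horb H \<psi>"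
abbreviation nondeg where "nondeg \<equiv> nondeg_quot_verts H T \<phi> \<psi>"

lemma verts_quot: "verts quot = vorb ` verts T"
  and arcs_quot: "arcs quot = aorb ` arcs T"
  unfolding quot_graph_def by simp_all

lemma vorb_act: "h \<in> H \<Longrightarrow> v \<in> verts T \<Longrightarrow> vorb (\<phi> h v) = vorb v"
  using V.horb_act_eq[OF subgroup_H] .

lemma aorb_act: "h \<in> H \<Longrightarrow> e \<in> arcs T \<Longrightarrow> aorb (\<psi> h e) = aorb e"
  using A.horb_act_eq[OF subgroup_H] .

lemma some_in_aorb:
  assumes "e \<in> arcs T"
  obtains h where "h \<in> H" "(SOME e'. e' \<in> aorb e) = \<psi> h e"
proof -
  have "(SOME e'. e' \<in> aorb e) \<in> aorb e" using A.mem_horb_self[OF subgroup_H assms] by (rule someI)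
  thus ?thesis using that unfolding horb_def by auto
qed

lemma src_quot: "e \<in> arcs T \<Longrightarrow> src quot (aorb e) = vorb (src T e)"
  by (rule some_in_aorb) (auto simp: quot_graph_def src_act vorb_act is_sgraph_arcD(4)[OF sgraph])

lemma rev_quot:
  assumes "e \<in> arcs T"
  shows "rev quot (aorb e) = aorb (rev T e)"
proof (rule some_in_aorb[OF assms])
  fix h assume h: "h \<in> H" "(SOME e'. e' \<in> aorb e) = \<psi> h e"
  hence "rev quot (aorb e) = aorb (\<psi> h (rev T e))"
    unfolding quot_graph_def using h(2) rev_act[OF H.mem_carrier[OF h(1)] assms] by simp
  thus ?thesis using aorb_act[OF h(1) is_sgraph_arcD(1)[OF sgraph assms]] by simp
qed

lemma tgt_quot: "e \<in> arcs T \<Longrightarrow> tgt quot (aorb e) = vorb (tgt T e)"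
  unfolding tgt_def using rev_quot src_quot is_sgraph_arcD(1)[OF sgraph] by simp

lemma is_sgraph_quot: "is_sgraph quot"
  unfolding is_sgraph_def
proof
  fix c assume "c \<in> arcs quot"
  then obtain e where e: "e \<in> arcs T" "c = aorb e" using arcs_quot by auto
  note re = is_sgraph_arcD[OF sgraph e(1)]
  have "rev quot c \<noteq> c"
  proof
    assume "rev quot c = c"
    hence "aorb (rev T e) = aorb e" using rev_quot[OF e(1)] e by simp
    then obtain h where "h \<in> H" "rev T e = \<psi> h e" using A.horb_eqD[OF subgroup_H re(1)] by blast
    thus False using no_inversion e(1) unfolding without_inversions_def by (metis H.mem_carrier)
  qed
  thus "src quot c \<in> verts quot \<and> rev quot c \<in> arcs quot \<and> rev quot (rev quot c) = c \<and> rev quot c \<noteq> c"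
    using e re src_quot rev_quot verts_quot arcs_quot by auto
qed

lemma is_path_quot: "is_path T u p v \<Longrightarrow> is_path quot (vorb u) (map aorb p) (vorb v)"
proof (induction p arbitrary: u)
  case Nil thus ?case using verts_quot by auto
next
  case (Cons e p)
  hence "e \<in> arcs T" "src T e = u" "is_path T (tgt T e) p v" using is_path_Cons[OF sgraph] by auto
  thus ?case using Cons.IH src_quot tgt_quot arcs_quot by (auto simp: is_path_Cons[OF is_sgraph_quot])
qed

lemma fixed_outside_nondeg_imp_one:
  assumes v: "v \<in> verts T" and "vorb v \<notin> nondeg" and h: "h \<in> H" "\<phi> h v = v"
  shows "h = \<one>"
proof -
  obtain v' where "v' \<in> vorb v" "H_degenerate H T \<phi> \<psi> v'"
    using assms(1,2) unfolding nondeg_quot_verts_def by blast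
  then obtain g e where g: "g \<in> H" "v' = \<phi> g v" and e: "e \<in> arcs T" "hstab H \<phi> v' = hstab H \<psi> e"
    unfolding horb_def H_degenerate_def by blast
  have gh: "g \<in> carrier G" "h \<in> carrier G" using g(1) h(1) by simp_all
  define k where "k = g \<otimes> h \<otimes> inv g"
  have k: "k \<in> H" unfolding k_def using g(1) h(1) H.m_closed H.m_inv_closed by blast
  have "\<phi> k v' = \<phi> (g \<otimes> h) (\<phi> (inv g) (\<phi> g v))"
    unfolding k_def g(2) using V.composition_rule[OF V.element_image[OF gh(1) v refl]] gh by simp
  also have "\<dots> = \<phi> g (\<phi> h v)"
    using V.action_inv_cancel(1)[OF gh(1) v] V.composition_rule[OF v gh] by simp
  finally have "\<phi> k v' = v'" using h(2) g(2) by simp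
  hence "\<psi> k e = e" using k e(2) unfolding hstab_def by blast
  hence "g \<otimes> h \<otimes> inv g = \<one>" using fixed_arc_imp_one[OF k e(1)] unfolding k_def by simp
  hence "g \<otimes> h = g" using inv_equality[of "g \<otimes> h" "inv g"] gh by simp
  thus ?thesis using gh by simp
qed

lemma quot_no_backtrack:
  assumes "e \<in> arcs T" "f \<in> arcs T" "tgt T e = src T f" "f \<noteq> rev T e"
    and "vorb (tgt T e) \<notin> nondeg"
  shows "aorb f \<noteq> rev quot (aorb e)"
proof
  assume "aorb f = rev quot (aorb e)"
  then obtain h where h: "h \<in> H" "f = \<psi> h (rev T e)"
    using A.horb_eqD[OF subgroup_H assms(2)] rev_quot[OF assms(1)] by auto
  have "\<phi> h (tgt T e) = tgt T e"
    using h assms(1,3) src_act is_sgraph_arcD(1,7)[OF sgraph] by (metis H.mem_carrier)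
  hence "h = \<one>" using fixed_outside_nondeg_imp_one assms(5) is_sgraph_arcD(5)[OF sgraph assms(1)] h(1) by blast
  thus False using h assms(4) A.action_one is_sgraph_arcD(1)[OF sgraph assms(1)] by simp
qed

lemma reduced_quot_path:
  assumes "is_path T x s z" "reduced T s"
    and "\<forall>i. Suc i < length s \<longrightarrow> vorb (tgt T (s ! i)) \<notin> nondeg"
  shows "reduced quot (map aorb s)"
  unfolding reduced_def
proof (intro allI impI)
  fix i assume i: "Suc i < length (map aorb s)"
  have "s ! i \<in> arcs T" "s ! Suc i \<in> arcs T" using is_path_arcs[OF assms(1)] i by auto
  moreover have "tgt T (s ! i) = src T (s ! Suc i)"
    using assms(1) i unfolding is_path_def by (auto split: if_splits)
  moreover have "s ! Suc i \<noteq> rev T (s ! i)" using assms(2) i unfolding reduced_def by auto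
  moreover have "vorb (tgt T (s ! i)) \<notin> nondeg" using assms(3) i by simp
  ultimately have "aorb (s ! Suc i) \<noteq> rev quot (aorb (s ! i))" by (rule quot_no_backtrack)
  thus "map aorb s ! Suc i \<noteq> rev quot (map aorb s ! i)" using i by simp
qed

end

section \<open>Lifting a finite subtree of the quotient\<close>

locale finite_core = edge_free_action +
  fixes A W E0
  assumes spanning: "spanning_tree (quot_graph H T \<phi> \<psi>) A"
    and nondeg_subset: "nondeg_quot_verts H T \<phi> \<psi> \<subseteq> W"
    and src_outside_subset: "src (quot_graph H T \<phi> \<psi>) ` (arcs (quot_graph H T \<phi> \<psi>) - A) \<subseteq> W"
    and W_verts: "W \<subseteq> verts (quot_graph H T \<phi> \<psi>)"
    and W_nonempty: "W \<noteq> {}"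
    and E0_closed: "\<forall>c\<in>E0. src (quot_graph H T \<phi> \<psi>) c \<in> W \<and> rev (quot_graph H T \<phi> \<psi>) c \<in> E0"
    and E0_connects: "\<forall>a\<in>W. \<forall>b\<in>W. \<exists>p.
       is_path (subg (quot_graph H T \<phi> \<psi>) (verts (quot_graph H T \<phi> \<psi>)) A) a p b \<and>
       reduced (quot_graph H T \<phi> \<psi>) p \<and> set p \<subseteq> E0"
begin

abbreviation spanning_subg where "spanning_subg \<equiv> subg quot (verts quot) A"

definition core_verts where "core_verts = {v \<in> verts T. vorb v \<in> W}"
definition core_arcs where "core_arcs = {e \<in> arcs T. aorb e \<in> (arcs quot - A) \<union> E0}"

lemma core_verts_subset: "core_verts \<subseteq> verts T"
  and core_arcs_subset: "core_arcs \<subseteq> arcs T"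
  unfolding core_verts_def core_arcs_def by auto

lemma spanning_subg_tree: "is_tree spanning_subg" and A_arcs: "A \<subseteq> arcs quot"
  using spanning unfolding spanning_tree_def by auto

lemma rev_quot_outside_A:
  assumes "c \<in> arcs quot - A"
  shows "rev quot c \<in> arcs quot - A"
proof -
  have "is_sgraph spanning_subg" using spanning_subg_tree unfolding is_tree_def by auto
  hence "rev quot c \<in> A \<Longrightarrow> c \<in> A"
    using is_sgraph_arcD(1,2)[OF is_sgraph_quot] assms by (metis DiffD1 is_sgraph_arcD(1) subg_simps(2,4))
  thus ?thesis using assms is_sgraph_arcD(1)[OF is_sgraph_quot] by blast
qed

lemma core_arcs_src: "e \<in> core_arcs \<Longrightarrow> src T e \<in> core_verts"
  unfolding core_arcs_def core_verts_def
  using src_quot src_outside_subset E0_closed is_sgraph_arcD(4)[OF sgraph] by auto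

lemma core_arcs_rev:
  assumes "e \<in> core_arcs"
  shows "rev T e \<in> core_arcs"
proof -
  have e: "e \<in> arcs T" "aorb e \<in> (arcs quot - A) \<union> E0" using assms unfolding core_arcs_def by auto
  hence "rev quot (aorb e) \<in> (arcs quot - A) \<union> E0" using rev_quot_outside_A E0_closed by blast
  thus ?thesis using rev_quot[OF e(1)] is_sgraph_arcD(1)[OF sgraph e(1)] unfolding core_arcs_def by simp
qed

lemma core_arcs_tgt: "e \<in> core_arcs \<Longrightarrow> tgt T e \<in> core_verts"
  unfolding tgt_def using core_arcs_rev core_arcs_src by blast

text \<open>
  The interior vertices of such a path have trivial stabilisers, so it projects to a reduced
  path of A between vertices of W; that path lies in E0, whose arcs lift to core arcs.
\<close>
lemma core_path_meets_core_arcs: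
  assumes x: "x \<in> core_verts" and path: "is_path T x s z" and z: "z \<in> core_verts"
    and red: "reduced T s" and "s \<noteq> []"
    and interior: "\<forall>i. Suc i < length s \<longrightarrow> tgt T (s ! i) \<notin> core_verts"
  shows "\<exists>f\<in>set s. f \<in> core_arcs"
proof (rule ccontr)
  assume none: "\<not> (\<exists>f\<in>set s. f \<in> core_arcs)"
  have s_arcs: "set s \<subseteq> arcs T" using is_path_arcs[OF path] .
  have W: "vorb x \<in> W" "vorb z \<in> W" using x z unfolding core_verts_def by auto
  have "set (map aorb s) \<subseteq> A" using none s_arcs arcs_quot unfolding core_arcs_def by auto
  hence "is_path spanning_subg (vorb x) (map aorb s) (vorb z)"
    using is_path_quot[OF path] is_path_subg[OF _ A_arcs] W W_verts by auto
  moreover have "vorb (tgt T (s ! i)) \<notin> nondeg" if "Suc i < length s" for i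
  proof -
    have "s ! i \<in> arcs T" using that s_arcs by (meson Suc_lessD nth_mem subsetD)
    hence "tgt T (s ! i) \<in> verts T" by (rule is_sgraph_arcD(5)[OF sgraph])
    thus ?thesis using that interior nondeg_subset unfolding core_verts_def by auto
  qed
  hence "reduced quot (map aorb s)" using reduced_quot_path[OF path red] by simp
  moreover obtain p where p: "is_path spanning_subg (vorb x) p (vorb z)" "reduced quot p" "set p \<subseteq> E0"
    using bspec[OF bspec[OF E0_connects W(1)] W(2)] by blast
  ultimately have "map aorb s = p" using tree_reduced_path_unique[OF spanning_subg_tree] by (metis reduced_subg)
  hence "aorb (hd s) \<in> E0" using p(3) hd_in_set[OF \<open>s \<noteq> []\<close>] by auto
  hence "hd s \<in> core_arcs" using s_arcs hd_in_set[OF \<open>s \<noteq> []\<close>] unfolding core_arcs_def by auto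
  thus False using none \<open>s \<noteq> []\<close> by simp
qed

lemma core_excursion:
  assumes x: "x \<in> core_verts" and path: "is_path T x (r @ [e]) z" and z: "z \<in> core_verts"
    and red: "reduced T (r @ [e])" and outside: "\<forall>f\<in>set r. tgt T f \<notin> core_verts"
  shows "r = [] \<and> e \<in> core_arcs"
proof -
  have "\<forall>i. Suc i < length (r @ [e]) \<longrightarrow> tgt T ((r @ [e]) ! i) \<notin> core_verts"
    using outside by (auto simp: nth_append)
  then obtain f where f: "f \<in> set (r @ [e])" "f \<in> core_arcs"
    using core_path_meets_core_arcs[OF x path z red] by blast
  have "r = []"
  proof (rule ccontr)
    assume "r \<noteq> []"
    then obtain r' l where r: "r = r' @ [l]" by (metis rev_exhaust)
    hence "tgt T l = src T e"
      using path is_path_snoc[OF sgraph, of x "r' @ [l]" e z] is_path_snoc[OF sgraph, of x r' l "src T e"]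
      by simp
    thus False using f r outside core_arcs_tgt[of f] core_arcs_src[of f] by auto
  qed
  thus ?thesis using f by simp
qed

lemma core_reduced_path:
  "is_path T x q y \<Longrightarrow> reduced T (r @ q) \<Longrightarrow> is_path T x0 r x \<Longrightarrow> x0 \<in> core_verts \<Longrightarrow>
   y \<in> core_verts \<Longrightarrow> \<forall>f\<in>set r. tgt T f \<notin> core_verts \<Longrightarrow> set (r @ q) \<subseteq> core_arcs"
proof (induction q arbitrary: r x x0)
  case Nil
  thus ?case
    by (cases "r = []") (auto simp: is_path_def dest: last_in_set)
next
  case (Cons e q)
  have e: "e \<in> arcs T" "src T e = x" "is_path T (tgt T e) q y"
    using Cons.prems(1) is_path_Cons[OF sgraph] by auto
  have path: "is_path T x0 (r @ [e]) (tgt T e)" using Cons.prems(3) e is_path_snoc[OF sgraph] by blast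
  have red: "reduced T ((r @ [e]) @ q)" using Cons.prems(2) by simp
  show ?case
  proof (cases "tgt T e \<in> core_verts")
    case True
    have "r = [] \<and> e \<in> core_arcs"
      using core_excursion[OF Cons.prems(4) path True _ Cons.prems(6)] red reduced_append by blast
    moreover have "reduced T q" using red reduced_append by blast
    hence "set q \<subseteq> core_arcs"
      using Cons.IH[where r="[]" and x="tgt T e" and x0="tgt T e"] e(3) True Cons.prems(5) is_path_start[OF e(3)] by simp
    ultimately show ?thesis by simp
  next
    case False
    thus ?thesis using Cons.IH[OF e(3) red path Cons.prems(4,5)] Cons.prems(6) by auto
  qed
qed

lemma core_is_tree: "is_tree (subg T core_verts core_arcs)"
  unfolding is_tree_def
proof (intro conjI)
  show "is_sgraph (subg T core_verts core_arcs)"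
    unfolding is_sgraph_def using core_arcs_src core_arcs_rev core_arcs_subset is_sgraph_arcD[OF sgraph] by auto
  show "verts (subg T core_verts core_arcs) \<noteq> {}"
    using W_nonempty W_verts verts_quot unfolding core_verts_def by auto
  show "connected_sg (subg T core_verts core_arcs)"
    unfolding connected_sg_def
  proof (intro ballI)
    fix x y assume "x \<in> verts (subg T core_verts core_arcs)" "y \<in> verts (subg T core_verts core_arcs)"
    hence xy: "x \<in> core_verts" "y \<in> core_verts" by auto
    then obtain q where "is_path T x q y" "reduced T q"
      using tree_reduced_path_exists[OF tree] core_verts_subset by blast
    moreover from this have "set q \<subseteq> core_arcs"
      using core_reduced_path[of x q y "[]" x] xy core_verts_subset by auto
    ultimately show "\<exists>es. is_path (subg T core_verts core_arcs) x es y"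
      using xy is_path_subg[OF core_verts_subset core_arcs_subset] by blast
  qed
  show "\<not> (\<exists>v es. es \<noteq> [] \<and> is_path (subg T core_verts core_arcs) v es v \<and> reduced (subg T core_verts core_arcs) es)"
    using tree is_path_subg[OF core_verts_subset core_arcs_subset] unfolding is_tree_def by auto
qed

lemma core_inv_subtree: "inv_subtree H T \<phi> \<psi> core_verts core_arcs"
proof -
  have invariant: "\<phi> h ` core_verts \<subseteq> core_verts" "\<psi> h ` core_arcs \<subseteq> core_arcs" if "h \<in> H" for h
    using that vorb_act aorb_act V.element_image[OF _ _ refl] A.element_image[OF _ _ refl]
    unfolding core_verts_def core_arcs_def by auto
  show ?thesis
    unfolding inv_subtree_def
    by (intro conjI ballI core_verts_subset core_arcs_subset core_is_tree invariant)
qed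

lemma finite_core_quotients:
  assumes "finite W" "finite E0" "finite (arcs quot - A)"
  shows "finite (vorb ` core_verts)" "finite (aorb ` core_arcs)"
proof -
  have "vorb ` core_verts \<subseteq> W" "aorb ` core_arcs \<subseteq> (arcs quot - A) \<union> E0"
    unfolding core_verts_def core_arcs_def by auto
  thus "finite (vorb ` core_verts)" "finite (aorb ` core_arcs)"
    using assms by (simp_all add: finite_subset)
qed

end

context edge_free_action
begin

lemma invariant_subtree_if_finite_kurosh_rank:
  assumes hyp: "has_hyperbolic H T \<phi>" and K: "kurosh_rank H T \<phi> \<psi> < \<infinity>"
  shows "\<exists>V E. inv_subtree H T \<phi> \<psi> V E \<and> finite (vorb ` V) \<and> finite (aorb ` E)"
proof -
  have "graph_rank quot + ecard nondeg < \<infinity>" using K hyp unfolding kurosh_rank_def by simp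
  hence "graph_rank quot \<noteq> \<infinity>" "ecard nondeg \<noteq> \<infinity>"
    by (cases "graph_rank quot"; cases "ecard nondeg"; simp)+
  hence "\<exists>A. spanning_tree quot A \<and> finite (arcs quot - A)" "finite nondeg"
    unfolding graph_rank_def ecard_def by (auto split: if_splits)
  then obtain A where A: "spanning_tree quot A" "finite (arcs quot - A)" and "finite nondeg" by blast
  have "verts T \<noteq> {}" using tree unfolding is_tree_def by simp
  then obtain v0 where v0: "v0 \<in> verts T" by blast
  define S where "S = insert (vorb v0) (nondeg \<union> src quot ` (arcs quot - A))"
  have S_fin: "finite S" unfolding S_def using \<open>finite nondeg\<close> A(2) by simp
  have S_verts: "S \<subseteq> verts quot"
    using v0 is_sgraph_arcD(4)[OF is_sgraph_quot] verts_quot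
    unfolding S_def nondeg_quot_verts_def by auto
  have A_tree: "is_tree (subg quot (verts quot) A)" using A(1) unfolding spanning_tree_def by (rule conjunct2)
  obtain W E0 where WE: "finite W" "finite E0" "S \<subseteq> W" "W \<subseteq> verts quot"
    "\<forall>c\<in>E0. src quot c \<in> W \<and> rev quot c \<in> E0"
    "\<forall>a\<in>W. \<forall>b\<in>W. \<exists>p. is_path (subg quot (verts quot) A) a p b \<and> reduced quot p \<and> set p \<subseteq> E0"
    using tree_finite_connecting_arcs[OF A_tree S_fin] S_verts unfolding S_def by auto
  have "nondeg \<subseteq> W" "src quot ` (arcs quot - A) \<subseteq> W" "W \<noteq> {}"
    using WE(3) unfolding S_def by auto
  then interpret finite_core G H T \<phi> \<psi> A W E0
    using A(1) WE(4-6) by unfold_locales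
  show ?thesis using core_inv_subtree finite_core_quotients[OF WE(1,2) A(2)] by blast
qed

lemma minimal_inv_subtree_exists:
  assumes "\<exists>V E. inv_subtree H T \<phi> \<psi> V E \<and> finite (vorb ` V) \<and> finite (aorb ` E)"
  shows "\<exists>V E. minimal_inv_subtree H T \<phi> \<psi> V E \<and> finite (vorb ` V) \<and> finite (aorb ` E)"
proof -
  define P where "P n \<longleftrightarrow> (\<exists>V E. inv_subtree H T \<phi> \<psi> V E \<and> finite (vorb ` V) \<and> finite (aorb ` E)
      \<and> card (vorb ` V) + card (aorb ` E) = n)" for n
  have "\<exists>n. P n" using assms unfolding P_def by blast
  hence "P (LEAST n. P n)" by (rule LeastI_ex)
  then obtain V E where VE: "inv_subtree H T \<phi> \<psi> V E" "finite (vorb ` V)" "finite (aorb ` E)"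
    "card (vorb ` V) + card (aorb ` E) = (LEAST n. P n)"
    unfolding P_def by blast
  have "V' = V \<and> E' = E" if sub: "inv_subtree H T \<phi> \<psi> V' E'" "V' \<subseteq> V" "E' \<subseteq> E" for V' E'
  proof -
    have orbits: "vorb ` V' \<subseteq> vorb ` V" "aorb ` E' \<subseteq> aorb ` E" using sub by auto
    hence "finite (vorb ` V')" "finite (aorb ` E')"
      using finite_subset[OF orbits(1) VE(2)] finite_subset[OF orbits(2) VE(3)] by simp_all
    hence "P (card (vorb ` V') + card (aorb ` E'))" using sub(1) unfolding P_def by blast
    hence "(LEAST n. P n) \<le> card (vorb ` V') + card (aorb ` E')" by (rule Least_le)
    moreover have "card (vorb ` V') \<le> card (vorb ` V)" "card (aorb ` E') \<le> card (aorb ` E)"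
      using card_mono[OF VE(2) orbits(1)] card_mono[OF VE(3) orbits(2)] by simp_all
    ultimately have "card (vorb ` V') = card (vorb ` V)" "card (aorb ` E') = card (aorb ` E)"
      using VE(4) by linarith+
    hence "vorb ` V' = vorb ` V" "aorb ` E' = aorb ` E"
      using card_subset_eq[OF VE(2) orbits(1)] card_subset_eq[OF VE(3) orbits(2)] by simp_all
    moreover have "\<forall>h\<in>H. \<phi> h ` V' \<subseteq> V'" "\<forall>h\<in>H. \<psi> h ` E' \<subseteq> E'" "V \<subseteq> verts T" "E \<subseteq> arcs T"
      using sub(1) VE(1) unfolding inv_subtree_def by auto
    ultimately show ?thesis
      using V.invariant_subset_eq_if_horb_image_eq[OF subgroup_H sub(2)]
        A.invariant_subset_eq_if_horb_image_eq[OF subgroup_H sub(3)] by simp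
  qed
  thus ?thesis using VE unfolding minimal_inv_subtree_def by blast
qed

end

theorem lemma2p3:
  fixes G :: "('g, 'b) monoid_scheme" and H :: "'g set"
    and T :: "('v, 'e) sgraph"
    and \<phi> :: "'g \<Rightarrow> 'v \<Rightarrow> 'v" and \<psi> :: "'g \<Rightarrow> 'e \<Rightarrow> 'e"
  assumes "tree_action G T \<phi> \<psi>"
    and "without_inversions G T \<psi>"
    and "subgroup H G"
    and "acts_freely_on_edges G H T \<psi>"
    and "kurosh_rank H T \<phi> \<psi> < \<infinity>"
  shows "tame H T \<phi> \<psi>"
proof -
  interpret edge_free_action G H T \<phi> \<psi> by (rule edge_free_action.intro[OF assms(1-4)])
  show ?thesis
  proof (cases "has_hyperbolic H T \<phi>")
    case False
    thus ?thesis using fixed_vertex_if_no_hyperbolic unfolding tame_def by blast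
  next
    case True
    thus ?thesis
      using minimal_inv_subtree_exists[OF invariant_subtree_if_finite_kurosh_rank[OF True assms(5)]]
      unfolding tame_def by blast
  qed
qed

end
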